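(* Let $p$ be an odd prime and $\alpha,X$ indeterminates over $\mathbb F_p$. For integers $0<r,s<p$ with $r+s\neq p$, \[ L_{p-1}^{(r\alpha)}(rX)\cdot L_{p-1}^{(s\alpha)}(sX)\equiv b_{r,s}(\alpha)\cdot L_{p-1}^{((r+s)\alpha)}\bigl((r+s)X\bigr)\pmod{X^p-(\alpha^p-\alpha)} \] in $\mathbb F_p(\alpha)[X]$. Furthermore, for $0<r<p$, \[ L_{p-1}^{(r\alpha)}(rX)\cdot L_{p-1}^{(-r\alpha)}(-rX)\equiv 1-\alpha^{p-1}\pmod{X^p-(\alpha^p-\alpha)}. \]
   Context: $\mathbb F_p$ is the field of $p$ elements, $\binom{x}{m}=x(x-1)\cdots(x-m+1)/m!$. $L_{p-1}^{(\alpha)}(X)=\sum_{k=0}^{p-1}\binom{\alpha-1}{p-1-k}\frac{(-X)^k}{k!}\in\mathbb F_p[\alpha,X]$, and $L_{p-1}^{(c\alpha)}(cX)$ denotes the result of substituting $c\alpha$ for $\alpha$ and $cX$ for $X$. For integers $0<r,s<p$ (interpreted as elements of $\mathbb F_p$), $b_{r,s}(\alpha)=\sum_{k=0}^{p-1}(-r/s)^k\binom{r\alpha-1}{p-1-k}\binom{s\alpha-1}{k}\in\mathbb F_p[\alpha]$. *)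

theory Defs
  imports "Berlekamp_Zassenhaus.Finite_Field" "HOL-Computational_Algebra.Fraction_Field"
begin

definition gbinom :: "'a::field \<Rightarrow> nat \<Rightarrow> 'a" where
  "gbinom x m = (\<Prod>i<m. (x - of_nat i)) / of_nat (fact m)"

definition alpha :: "'p::prime_card mod_ring poly fract" where
  "alpha = to_fract [:0, 1:]"

definition cst :: "'p::prime_card mod_ring \<Rightarrow> 'p mod_ring poly fract" where
  "cst c = to_fract [:c:]"

text \<open>L_{p-1}^{(c alpha)}(c X) in F_p(alpha)[X], p = CARD('p).\<close>
definition Lsub :: "'p::prime_card mod_ring \<Rightarrow> 'p mod_ring poly fract poly" where
  "Lsub c = (let p = CARD('p) in
     (\<Sum>k\<le>p - 1. monom (gbinom (cst c * alpha - 1) (p - 1 - k)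
                          * (- cst c) ^ k / of_nat (fact k)) k))"

definition bcoef :: "'p::prime_card mod_ring \<Rightarrow> 'p mod_ring \<Rightarrow> 'p mod_ring poly fract" where
  "bcoef r s = (let p = CARD('p) in
     (\<Sum>k\<le>p - 1. (- cst r / cst s) ^ k * gbinom (cst r * alpha - 1) (p - 1 - k)
                   * gbinom (cst s * alpha - 1) k))"

definition modulus :: "'p::prime_card mod_ring poly fract poly" where
  "modulus = monom 1 CARD('p) - [: alpha ^ CARD('p) - alpha :]"

end

theory Submission
  imports Defs "Berlekamp_Zassenhaus.Berlekamp_Type_Based"
begin

text \<open>
  Write L_c = L_(p-1)^(c alpha)(c X), m = X^p - (alpha^p - alpha) and
  E_c y = X y' - c (X - alpha) y over F_p(alpha). The coefficients of L_c satisfy a first-order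
  recurrence which says precisely that E_c L_c = c m. The operator obeys the twisted Leibniz rule
  E_(c+d) (y z) = E_c(y) z + y E_d(z), and E_c (m g) = m E_c(g) because m' = 0 in
  characteristic p. Hence E_(r+s) maps Q = L_r L_s - b_(r,s) L_(r+s) into the ideal (m), and
  therefore also the remainder y of Q modulo m; likewise E_0 for Q = L_r L_(-r). Since
  deg y < p, this forces the coefficients of E y in degrees 1, ..., p-1 to vanish, i.e. a
  recurrence for the coefficients of y. If r + s /= 0 in F_p, the recurrence determines y by its
  coefficient of X^(p-1), which is zero because b_(r,s) is exactly the value that kills the
  coefficient of X^(p-1) in Q; so y = 0. For E_0 it forces y to be constant, and the constant
  is read off from the coefficients of X^0 and X^p of L_r L_(-r), using Wilson's theorem and
  prod_(m=1)^(p-1) (x - m) = x^(p-1) - 1 together with its derivative.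
\<close>

lemma CHAR_fract [simp]: "CHAR('a::idom fract) = CHAR('a)"
proof -
  have to_fract_of_nat: "to_fract (of_nat n) = (of_nat n :: 'a fract)" for n
    by (induction n) simp_all
  show ?thesis
    by (rule CHAR_eqI) (auto simp: of_nat_eq_0_iff_char_dvd simp flip: to_fract_of_nat)
qed

lemma gbinom_minus_one:
  "gbinom (x - 1) n = (\<Prod>m\<in>{1..n}. x - of_nat m) / of_nat (fact n)"
  unfolding gbinom_def by (simp add: prod.atLeast1_atMost_eq algebra_simps)

section \<open>The operator y |-> X y' - c (X - a) y\<close>

definition euler_op :: "'a::idom \<Rightarrow> 'a \<Rightarrow> 'a poly \<Rightarrow> 'a poly" where
  "euler_op c a y = [:0, 1:] * pderiv y - smult c ([:- a, 1:] * y)"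

lemma coeff_euler_op:
  "coeff (euler_op c a y) n = (case n of
      0 \<Rightarrow> c * a * coeff y 0
    | Suc m \<Rightarrow> of_nat (Suc m) * coeff y (Suc m) - c * coeff y m + c * a * coeff y (Suc m))"
  by (cases n) (simp_all add: euler_op_def coeff_pderiv algebra_simps)

lemma euler_op_diff: "euler_op c a (y - z) = euler_op c a y - euler_op c a z"
  by (rule poly_eqI) (simp add: coeff_euler_op algebra_simps split: nat.split)

lemma euler_op_smult: "euler_op c a (smult b y) = smult b (euler_op c a y)"
  by (rule poly_eqI) (simp add: coeff_euler_op algebra_simps split: nat.split)

lemma euler_op_mult: "euler_op (c + d) a (y * z) = euler_op c a y * z + y * euler_op d a z"
  by (simp add: euler_op_def pderiv_mult smult_add_left algebra_simps)

lemma euler_op_mult_const: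
  "pderiv m = 0 \<Longrightarrow> euler_op c a (m * y) = m * euler_op c a y"
  by (simp add: euler_op_def pderiv_mult algebra_simps)

lemma degree_euler_op_le: "degree (euler_op c a y) \<le> Suc (degree y)"
proof (rule degree_le, intro allI impI)
  fix n assume "Suc (degree y) < n"
  then obtain m where "n = Suc m" "degree y < m"
    by (cases n) auto
  then show "coeff (euler_op c a y) n = 0"
    by (simp add: coeff_euler_op coeff_eq_0)
qed

lemma dvd_euler_op_mod:
  fixes m y :: "'a::field poly"
  assumes "pderiv m = 0" "m dvd euler_op c a y"
  shows "m dvd euler_op c a (y mod m)"
proof -
  have "y mod m = y - m * (y div m)"
    using minus_div_mult_eq_mod[of y m] by (simp add: mult.commute)
  then show ?thesis
    using assms by (simp add: euler_op_diff euler_op_mult_const)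
qed

lemma euler_op_eq_smult_if_dvd:
  fixes m y :: "'a::field poly"
  assumes "m dvd euler_op c a y" "degree y < degree m"
  obtains k where "euler_op c a y = smult k m"
proof -
  obtain g where g: "euler_op c a y = m * g"
    using assms(1) by (elim dvdE)
  show ?thesis
  proof (cases "g = 0 \<or> m = 0")
    case True
    then show ?thesis using g that[of 0] by auto
  next
    case False
    then have "degree m + degree g \<le> degree m"
      using degree_euler_op_le[of c a y] assms(2) by (simp add: g degree_mult_eq)
    then have "g = [:coeff g 0:]"
      using degree_0_id[of g] by simp
    then show ?thesis
      using g that[of "coeff g 0"] by (metis mult.commute mult_pCons_left mult_zero_left add_0_right pCons_0_0)
  qed
qed

lemma euler_op_coeffs_vanish_imp_0:
  fixes y :: "'a::field poly"
  assumes "\<And>k. 0 < k \<Longrightarrow> k < n \<Longrightarrow> coeff (euler_op c a y) k = 0"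
    and "degree y < n" "coeff y (n - 1) = 0" "c \<noteq> 0"
  shows "y = 0"
proof -
  have vanish: "coeff y (n - 1 - d) = 0" for d
  proof (induction d)
    case 0
    then show ?case using assms(3) by simp
  next
    case (Suc d)
    show ?case
    proof (cases "Suc d < n")
      case True
      define j where "j = n - 1 - Suc d"
      have j: "Suc j = n - 1 - d" "Suc j < n"
        using True by (auto simp: j_def)
      have "coeff y (Suc j) = 0"
        using Suc.IH j(1) by simp
      moreover have "coeff (euler_op c a y) (Suc j) = 0"
        using assms(1) j(2) by simp
      ultimately have "c * coeff y j = 0"
        by (simp add: coeff_euler_op)
      then show ?thesis
        using assms(4) by (simp add: j_def)
    next
      case False
      then show ?thesis using Suc.IH by simp
    qed
  qed
  show ?thesis
  proof (rule poly_eqI)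
    fix k
    show "coeff y k = coeff 0 k"
    proof (cases "k < n")
      case True
      then show ?thesis
        using vanish[of "n - 1 - k"] by simp
    next
      case False
      then show ?thesis using assms(2) by (simp add: coeff_eq_0)
    qed
  qed
qed

lemma euler_op_0_coeffs_vanish_imp_const:
  fixes y :: "'a::field poly"
  assumes "\<And>k. 0 < k \<Longrightarrow> k < n \<Longrightarrow> coeff (euler_op 0 a y) k = 0"
    and "\<And>k. 0 < k \<Longrightarrow> k < n \<Longrightarrow> (of_nat k :: 'a) \<noteq> 0"
    and "degree y < n"
  shows "y = [:coeff y 0:]"
proof (rule poly_eqI)
  fix k
  show "coeff y k = coeff [:coeff y 0:] k"
  proof (cases "k = 0 \<or> n \<le> k")
    case True
    then show ?thesis using assms(3) by (auto simp: coeff_eq_0)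
  next
    case False
    then obtain m where "k = Suc m" "k < n"
      by (cases k) auto
    then show ?thesis
      using assms(1,2)[of k] by (simp add: coeff_euler_op)
  qed
qed

lemma degree_monom_minus_const:
  "0 < n \<Longrightarrow> degree (monom (1 :: 'a::comm_ring_1) n - [:b:]) = n"
  by (intro antisym degree_le le_degree) (auto simp: coeff_pCons split: nat.split)

lemma mod_monom_minus_const:
  fixes q :: "'a::field poly"
  assumes "0 < n" "degree q < 2 * n"
  shows "q mod (monom 1 n - [:b:]) = poly_cutoff n q + smult b (poly_shift n q)"
proof -
  let ?m = "monom 1 n - [:b:]" and ?r = "poly_cutoff n q + smult b (poly_shift n q)"
  have "q = ?r + ?m * poly_shift n q"
    by (rule poly_eqI) (simp add: coeff_poly_cutoff coeff_poly_shift coeff_monom_mult left_diff_distrib)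
  moreover have "degree ?r < degree ?m"
  proof -
    have "degree ?r \<le> n - 1"
      using assms by (intro degree_le) (auto simp: coeff_poly_cutoff coeff_poly_shift coeff_eq_0)
    moreover have "degree ?m = n"
      by (rule degree_monom_minus_const[OF assms(1)])
    ultimately show ?thesis
      using assms(1) by linarith
  qed
  ultimately show ?thesis
    by (metis mod_mult_self2 mod_poly_less)
qed

section \<open>The rational function field F_p(alpha)\<close>

type_synonym 'p ratfun = "'p mod_ring poly fract"

lemma card_ge_2: "2 \<le> CARD('p::prime_card)"
  using prime_card prime_ge_2_nat by blast

lemma of_nat_ratfun_eq_0_iff: "(of_nat k :: 'p::prime_card ratfun) = 0 \<longleftrightarrow> CARD('p) dvd k"
  by (simp add: of_nat_eq_0_iff_char_dvd)

lemma of_nat_card_minus_ratfun: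
  "k \<le> CARD('p) \<Longrightarrow> (of_nat (CARD('p) - k) :: 'p::prime_card ratfun) = - of_nat k"
  by (simp add: of_nat_ratfun_eq_0_iff)

lemma bij_betw_of_nat_mod_ring: "bij_betw (of_nat :: nat \<Rightarrow> 'p::prime_card mod_ring) {..<CARD('p)} UNIV"
proof (rule bij_betw_imageI)
  show "inj_on (of_nat :: nat \<Rightarrow> 'p mod_ring) {..<CARD('p)}"
    by (rule inj_onI) (auto simp: of_nat_eq_iff_cong_CHAR intro: cong_less_modulus_unique_nat)
  show "(of_nat :: nat \<Rightarrow> 'p mod_ring) ` {..<CARD('p)} = UNIV"
    using surj_of_nat_mod_ring[where 'a='p] by blast
qed

interpretation cst: field_hom cst
proof
  fix a b :: "'p::prime_card mod_ring"
  show "cst (a + b) = cst a + cst b"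
    unfolding cst_def by (simp add: to_fract_add[symmetric] del: to_fract_add)
  show "cst (a * b) = cst a * cst b"
    unfolding cst_def by (simp add: to_fract_mult[symmetric] del: to_fract_mult)
  show "cst 0 = 0"
    unfolding cst_def by simp
  show "cst 1 = 1"
    unfolding cst_def by simp
qed

lemma cst_power_card: "cst c ^ CARD('p) = cst (c :: 'p::prime_card mod_ring)"
  by (simp flip: cst.hom_power)

lemma cst_power_card_minus_1:
  assumes "(c :: 'p::prime_card mod_ring) \<noteq> 0"
  shows "cst c ^ (CARD('p) - 1) = 1"
proof -
  have "cst c ^ (CARD('p) - 1) * cst c = cst c ^ CARD('p)"
    using card_ge_2[where 'p='p] by (simp flip: power_Suc2)
  then show ?thesis
    using assms by (simp add: cst_power_card)
qed

lemma minus_one_power_card_minus_1: "(- 1 :: 'p::prime_card ratfun) ^ (CARD('p) - 1) = 1"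
  using cst_power_card_minus_1[of "- 1 :: 'p mod_ring"] by (simp add: cst.hom_uminus)

lemma prod_X_minus_of_nat:
  "(\<Prod>m\<in>{1..<CARD('p)}. [:- of_nat m, 1:]) = monom (1 :: 'p::prime_card ratfun) (CARD('p) - 1) - 1"
proof -
  interpret cst_poly: map_poly_comm_ring_hom cst ..
  have ins: "{..<CARD('p)} = insert 0 {1..<CARD('p)}"
    using card_ge_2[where 'p='p] by auto
  have "[:0, 1:] * (monom 1 (CARD('p) - 1) - 1) = monom (1 :: 'p ratfun) CARD('p) - monom 1 1"
    using card_ge_2[where 'p='p] by (intro poly_eqI) (auto simp: coeff_pCons split: nat.split)
  also have "\<dots> = (\<Prod>x\<in>(UNIV :: 'p mod_ring set). [:- cst x, 1:])"
    using arg_cong[OF poly_monom_identity_mod_p[where 'a='p], of "map_poly cst"]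
    by (simp add: cst_poly.hom_prod cst_poly.hom_minus map_poly_monom cst.hom_uminus)
  also have "\<dots> = (\<Prod>m<CARD('p). [:- of_nat m, 1:])"
    by (simp add: cst.hom_of_nat flip: prod.reindex_bij_betw[OF bij_betw_of_nat_mod_ring])
  also have "\<dots> = [:0, 1:] * (\<Prod>m\<in>{1..<CARD('p)}. [:- of_nat m, 1:])"
    unfolding ins by simp
  finally show ?thesis
    by simp
qed

lemma prod_minus_of_nat:
  "(\<Prod>m\<in>{1..<CARD('p)}. x - of_nat m) = x ^ (CARD('p) - 1) - (1 :: 'p::prime_card ratfun)"
  using arg_cong[OF prod_X_minus_of_nat, of "\<lambda>q. poly q x"] by (simp add: poly_prod poly_monom)

lemma sum_prod_minus_of_nat:
  "(\<Sum>j\<in>{1..<CARD('p)}. \<Prod>m\<in>{1..<CARD('p)} - {j}. (x :: 'p::prime_card ratfun) - of_nat m)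
     = - (x ^ (CARD('p) - 2))"
proof -
  have "(\<Sum>j\<in>{1..<CARD('p)}. \<Prod>m\<in>{1..<CARD('p)} - {j}. [:- of_nat m, 1:])
      = pderiv (\<Prod>m\<in>{1..<CARD('p)}. [:- of_nat m, 1 :: 'p ratfun:])"
    by (simp add: pderiv_prod pderiv_pCons)
  also have "\<dots> = pderiv (monom 1 (CARD('p) - 1) - 1)"
    by (simp only: prod_X_minus_of_nat)
  also have "\<dots> = monom (- 1) (CARD('p) - 2)"
    using card_ge_2[where 'p='p]
    by (simp add: pderiv_diff pderiv_monom of_nat_ratfun_eq_0_iff numeral_2_eq_2)
  finally have "(\<Sum>j\<in>{1..<CARD('p)}. \<Prod>m\<in>{1..<CARD('p)} - {j}. [:- of_nat m, 1:])
      = monom (- 1 :: 'p ratfun) (CARD('p) - 2)" .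
  from arg_cong[OF this, of "\<lambda>q. poly q x"] show ?thesis
    by (simp add: poly_prod poly_sum poly_monom)
qed

lemma prod_plus_of_nat_eq_prod_minus:
  assumes "d < CARD('p)"
  shows "(\<Prod>m\<in>{1..d}. x + of_nat m)
    = (\<Prod>m\<in>{CARD('p) - d..CARD('p) - 1}. x - of_nat m :: 'p::prime_card ratfun)"
proof (rule prod.reindex_bij_witness[of _ "\<lambda>m. CARD('p) - m" "\<lambda>m. CARD('p) - m"])
  fix m assume "m \<in> {1..d}"
  then have "m \<le> CARD('p)"
    using assms by simp
  then show "x - of_nat (CARD('p) - m) = x + of_nat m"
    unfolding of_nat_card_minus_ratfun[OF \<open>m \<le> CARD('p)\<close>] by simp
qed (use assms in auto)

lemma fact_card_minus_1: "(of_nat (fact (CARD('p) - 1)) :: 'p::prime_card ratfun) = - 1"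
proof -
  have "(- 1) ^ (CARD('p) - 1) * (\<Prod>m\<in>{1..<CARD('p)}. of_nat m) = (- 1 :: 'p ratfun)"
    using prod_minus_of_nat[where 'p='p, of 0] card_ge_2[where 'p='p] by (simp add: prod_uminus)
  moreover have "{1..<CARD('p)} = {1..CARD('p) - 1}"
    using card_ge_2[where 'p='p] by auto
  ultimately show ?thesis
    using minus_one_power_card_minus_1[where 'p='p] unfolding fact_prod[where 'a=nat]
    by simp
qed

lemma fact_mult_fact_complement:
  "k < CARD('p) \<Longrightarrow>
     (of_nat (fact k) * of_nat (fact (CARD('p) - 1 - k)) :: 'p::prime_card ratfun) = - ((- 1) ^ k)"
proof (induction k)
  case 0
  then show ?case using fact_card_minus_1[where 'p='p] by simp
next
  case (Suc k)
  define d where "d = CARD('p) - 1 - Suc k"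
  have d: "CARD('p) - 1 - k = Suc d" "CARD('p) - Suc k = Suc d"
    using Suc.prems by (auto simp: d_def)
  have "(of_nat (Suc d) :: 'p ratfun) = - of_nat (Suc k)"
    using of_nat_card_minus_ratfun[where 'p='p, of "Suc k"] d(2) Suc.prems by (metis less_imp_le_nat)
  then have fact_Suc_d: "(of_nat (fact (Suc d)) :: 'p ratfun) = - of_nat (Suc k) * of_nat (fact d)"
    by (simp only: fact_Suc of_nat_id of_nat_mult)
  have fact_Suc_k: "(of_nat (fact (Suc k)) :: 'p ratfun) = of_nat (Suc k) * of_nat (fact k)"
    by (simp only: fact_Suc of_nat_id of_nat_mult)
  have "(of_nat (fact (Suc k)) * of_nat (fact d) :: 'p ratfun)
      = - (of_nat (fact k) * of_nat (fact (Suc d)))"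
    unfolding fact_Suc_d fact_Suc_k by (simp add: algebra_simps)
  also have "\<dots> = (- 1) ^ k"
    using Suc.IH Suc.prems unfolding d(1) by simp
  finally show ?case
    unfolding d_def[symmetric] by simp
qed

section \<open>Reduction modulo X^p - (alpha^p - alpha)\<close>

lemma coeff_modulus:
  "coeff (modulus :: 'p::prime_card ratfun poly) n
     = (if n = CARD('p) then 1 else 0) - (if n = 0 then alpha ^ CARD('p) - alpha else 0)"
  unfolding modulus_def by (cases n) auto

lemma pderiv_modulus: "pderiv (modulus :: 'p::prime_card ratfun poly) = 0"
  unfolding modulus_def by (simp add: pderiv_diff pderiv_monom pderiv_pCons of_nat_ratfun_eq_0_iff)

lemma degree_modulus: "degree (modulus :: 'p::prime_card ratfun poly) = CARD('p)"
  unfolding modulus_def by (rule degree_monom_minus_const) simp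

lemma degree_mod_modulus: "degree (q mod modulus) < CARD('p)"
  for q :: "'p::prime_card ratfun poly"
  using degree_mod_less[of modulus q] degree_modulus[where 'p='p] card_ge_2[where 'p='p]
  by (cases "modulus = (0 :: 'p ratfun poly)") auto

lemma coeff_mod_modulus:
  fixes q :: "'p::prime_card ratfun poly"
  assumes "degree q < 2 * CARD('p)" "k < CARD('p)"
  shows "coeff (q mod modulus) k = coeff q k + (alpha ^ CARD('p) - alpha) * coeff q (k + CARD('p))"
  unfolding modulus_def using assms
  by (simp add: mod_monom_minus_const coeff_poly_cutoff coeff_poly_shift)

lemma coeff_euler_op_mod_modulus:
  fixes q :: "'p::prime_card ratfun poly"
  assumes "modulus dvd euler_op c alpha q" "0 < k" "k < CARD('p)"
  shows "coeff (euler_op c alpha (q mod modulus)) k = 0"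
proof -
  have "modulus dvd euler_op c alpha (q mod modulus)"
    by (rule dvd_euler_op_mod[OF pderiv_modulus assms(1)])
  then obtain e where "euler_op c alpha (q mod modulus) = smult e modulus"
    using euler_op_eq_smult_if_dvd degree_mod_modulus degree_modulus by metis
  then show ?thesis
    using assms(2,3) by (simp add: coeff_modulus)
qed

lemma modulus_dvd_if_euler_op:
  fixes q :: "'p::prime_card ratfun poly"
  assumes "c \<noteq> 0" "modulus dvd euler_op c alpha q"
    and "degree q \<le> 2 * CARD('p) - 2" "coeff q (CARD('p) - 1) = 0"
  shows "modulus dvd q"
proof -
  have "q mod modulus = 0"
  proof (rule euler_op_coeffs_vanish_imp_0)
    show "coeff (euler_op c alpha (q mod modulus)) k = 0" if "0 < k" "k < CARD('p)" for k
      using coeff_euler_op_mod_modulus[OF assms(2) that] .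
    have "coeff q (CARD('p) - 1 + CARD('p)) = 0"
      using assms(3) card_ge_2[where 'p='p] by (intro coeff_eq_0) linarith
    then show "coeff (q mod modulus) (CARD('p) - 1) = 0"
      using coeff_mod_modulus[of q "CARD('p) - 1"] assms(3,4) card_ge_2[where 'p='p] by simp
  qed (use assms(1) degree_mod_modulus in auto)
  then show ?thesis
    by (simp add: dvd_eq_mod_eq_0)
qed

lemma modulus_dvd_minus_const_if_euler_op_0:
  fixes q :: "'p::prime_card ratfun poly"
  assumes "modulus dvd euler_op 0 alpha q" "degree q < 2 * CARD('p)"
  shows "modulus dvd q - [:coeff q 0 + (alpha ^ CARD('p) - alpha) * coeff q CARD('p):]"
proof -
  have "q mod modulus = [:coeff (q mod modulus) 0:]"
  proof (rule euler_op_0_coeffs_vanish_imp_const)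
    show "coeff (euler_op 0 alpha (q mod modulus)) k = 0" if "0 < k" "k < CARD('p)" for k
      using coeff_euler_op_mod_modulus[OF assms(1) that] .
    show "(of_nat k :: 'p ratfun) \<noteq> 0" if "0 < k" "k < CARD('p)" for k
      using that by (auto simp: of_nat_ratfun_eq_0_iff dest: dvd_imp_le)
  qed (rule degree_mod_modulus)
  also have "coeff (q mod modulus) 0 = coeff q 0 + (alpha ^ CARD('p) - alpha) * coeff q CARD('p)"
    using coeff_mod_modulus[OF assms(2), of 0] by simp
  finally show ?thesis
    by (metis dvd_minus_mod)
qed

section \<open>Coefficients of L_(p-1)^(c alpha)(c X)\<close>

lemma coeff_Lsub:
  "coeff (Lsub c) k = (if k < CARD('p) then
     gbinom (cst c * alpha - 1) (CARD('p) - 1 - k) * (- cst c) ^ k / of_nat (fact k) else 0)"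
  for c :: "'p::prime_card mod_ring"
  using card_ge_2[where 'p='p] unfolding Lsub_def Let_def by (auto simp: coeff_sum)

lemma coeff_Lsub_eq_0: "CARD('p) \<le> k \<Longrightarrow> coeff (Lsub c) k = 0"
  for c :: "'p::prime_card mod_ring"
  by (simp add: coeff_Lsub)

lemma degree_Lsub: "degree (Lsub (c :: 'p::prime_card mod_ring)) \<le> CARD('p) - 1"
  by (rule degree_le) (auto simp: coeff_Lsub)

lemma coeff_Lsub_eq_prod:
  fixes c :: "'p::prime_card mod_ring"
  assumes "k < CARD('p)"
  shows "coeff (Lsub c) k = - (cst c ^ k * (\<Prod>m\<in>{1..CARD('p) - 1 - k}. cst c * alpha - of_nat m))"
proof -
  let ?P = "\<Prod>m\<in>{1..CARD('p) - 1 - k}. cst c * alpha - of_nat m"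
  have "coeff (Lsub c) k
      = ?P * ((- 1) ^ k * cst c ^ k) / (of_nat (fact k) * of_nat (fact (CARD('p) - 1 - k)))"
    using assms by (simp add: coeff_Lsub gbinom_minus_one power_minus[of "cst c"] mult.commute)
  also have "\<dots> = ?P * ((- 1) ^ k * cst c ^ k) / - ((- 1) ^ k)"
    by (simp only: fact_mult_fact_complement[OF assms])
  also have "\<dots> = - (cst c ^ k * ?P)"
    by (simp add: mult.commute)
  finally show ?thesis .
qed

lemma coeff_Lsub_top: "coeff (Lsub c) (CARD('p) - 1) = - (cst c ^ (CARD('p) - 1))"
  for c :: "'p::prime_card mod_ring"
  using coeff_Lsub_eq_prod[of "CARD('p) - 1" c] card_ge_2[where 'p='p] by simp

lemma coeff_Lsub_0:
  fixes c :: "'p::prime_card mod_ring"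
  assumes "c \<noteq> 0"
  shows "coeff (Lsub c) 0 = 1 - alpha ^ (CARD('p) - 1)"
proof -
  have "{1..CARD('p) - 1} = {1..<CARD('p)}"
    using card_ge_2[where 'p='p] by auto
  then show ?thesis
    using coeff_Lsub_eq_prod[of 0 c] prod_minus_of_nat[of "cst c * alpha"] cst_power_card_minus_1[OF assms]
    by (simp add: power_mult_distrib)
qed

lemma coeff_Lsub_Suc:
  fixes c :: "'p::prime_card mod_ring"
  assumes "Suc j < CARD('p)"
  shows "cst c * coeff (Lsub c) j = (cst c * alpha + of_nat (Suc j)) * coeff (Lsub c) (Suc j)"
proof -
  define d where "d = CARD('p) - 1 - Suc j"
  have d: "CARD('p) - 1 - j = Suc d" "CARD('p) - 1 - Suc j = d"
    using assms by (auto simp: d_def)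
  have "CARD('p) - Suc j = Suc d"
    using d(1) by simp
  then have sd: "(of_nat (Suc d) :: 'p ratfun) = - of_nat (Suc j)"
    using of_nat_card_minus_ratfun[where 'p='p, of "Suc j"] assms by (metis less_imp_le_nat)
  have "cst c * alpha - of_nat (Suc d) = cst c * alpha + of_nat (Suc j)"
    unfolding sd by simp
  then have P: "(\<Prod>m\<in>{1..Suc d}. cst c * alpha - of_nat m)
      = (\<Prod>m\<in>{1..d}. cst c * alpha - of_nat m) * (cst c * alpha + of_nat (Suc j))"
    by (simp del: of_nat_Suc)
  have "j < CARD('p)"
    using assms by simp
  show ?thesis
    unfolding coeff_Lsub_eq_prod[OF assms] coeff_Lsub_eq_prod[OF \<open>j < CARD('p)\<close>] d P
    by (simp add: algebra_simps)
qed

lemma euler_op_Lsub: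
  "euler_op (cst c) alpha (Lsub c) = smult (cst c) modulus"
  for c :: "'p::prime_card mod_ring"
proof (rule poly_eqI)
  fix n
  obtain q where q: "CARD('p) = Suc q"
    using card_ge_2[where 'p='p] by (cases "CARD('p)") auto
  consider "n = 0" | m where "n = Suc m" "Suc m < CARD('p)" | "n = Suc q" | "Suc q < n"
    using q by (metis linorder_neqE_nat not0_implies_Suc)
  then show "coeff (euler_op (cst c) alpha (Lsub c)) n = coeff (smult (cst c) modulus) n"
  proof cases
    case 1
    show ?thesis
    proof (cases "c = 0")
      case True
      then show ?thesis
        using 1 by (simp add: coeff_euler_op coeff_modulus)
    next
      case False
      then show ?thesis
        using 1 q by (simp add: coeff_euler_op coeff_modulus coeff_Lsub_0 algebra_simps)
    qed
  next
    case 2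
    then show ?thesis
      using coeff_Lsub_Suc[of m c] by (simp add: coeff_euler_op coeff_modulus algebra_simps)
  next
    case 3
    have "coeff (Lsub c) (Suc q) = 0" "coeff (Lsub c) q = - (cst c ^ q)"
      using coeff_Lsub[of c "Suc q"] coeff_Lsub_top[of c] q by simp_all
    moreover have "cst c * cst c ^ q = cst c"
      using cst_power_card[of c] q by simp
    ultimately show ?thesis
      using 3 q by (simp add: coeff_euler_op coeff_modulus)
  next
    case 4
    then show ?thesis
      using q by (cases n) (simp_all add: coeff_euler_op coeff_modulus coeff_Lsub)
  qed
qed

lemma coeff_Lsub_mult_Lsub_top:
  fixes r s :: "'p::prime_card mod_ring"
  assumes "s \<noteq> 0"
  shows "coeff (Lsub r * Lsub s) (CARD('p) - 1) = - bcoef r s"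
proof -
  have cancel: "g1 * u ^ i / f1 * (g2 * (- w) ^ k / f2) = - ((u / w) ^ i * g1 * g2)"
    if "f1 * f2 = - ((- 1) ^ i)" "(- w) ^ k * (- w) ^ i = 1" for g1 g2 u w f1 f2 :: "'p ratfun" and i k
  proof -
    have "(- w) ^ i \<noteq> 0"
      using that(2) by (metis mult_zero_right zero_neq_one)
    then have "(- w) ^ k = 1 / (- w) ^ i"
      using that(2) by (simp add: eq_divide_eq)
    then have "g1 * u ^ i / f1 * (g2 * (- w) ^ k / f2) = g1 * g2 * u ^ i / ((- w) ^ i * (f1 * f2))"
      by (simp add: mult_ac)
    also have "\<dots> = - (g1 * g2 * u ^ i / ((- w) ^ i * (- 1) ^ i))"
      using that(1) by simp
    also have "(- w) ^ i * (- 1) ^ i = w ^ i"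
      by (simp flip: power_mult_distrib)
    finally show ?thesis
      by (simp add: power_divide mult_ac)
  qed
  have "coeff (Lsub r * Lsub s) (CARD('p) - 1)
      = (\<Sum>i\<le>CARD('p) - 1. coeff (Lsub r) i * coeff (Lsub s) (CARD('p) - 1 - i))"
    by (simp add: coeff_mult)
  also have "\<dots> = (\<Sum>i\<le>CARD('p) - 1. - ((- cst r / cst s) ^ i
      * gbinom (cst r * alpha - 1) (CARD('p) - 1 - i) * gbinom (cst s * alpha - 1) i))"
  proof (rule sum.cong[OF refl])
    fix i assume "i \<in> {..CARD('p) - 1}"
    then have i: "i < CARD('p)" "CARD('p) - 1 - (CARD('p) - 1 - i) = i" "CARD('p) - 1 - i + i = CARD('p) - 1"
      using card_ge_2[where 'p='p] by auto
    have "(- cst s) ^ (CARD('p) - 1 - i) * (- cst s) ^ i = (- cst s) ^ (CARD('p) - 1)"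
      by (simp only: power_add[symmetric] i(3))
    also have "\<dots> = 1"
      using cst_power_card_minus_1[of "- s"] assms by (simp add: cst.hom_uminus)
    finally have "(- cst s) ^ (CARD('p) - 1 - i) * (- cst s) ^ i = 1" .
    from cancel[OF fact_mult_fact_complement[OF i(1)] this]
    show "coeff (Lsub r) i * coeff (Lsub s) (CARD('p) - 1 - i) = - ((- cst r / cst s) ^ i
      * gbinom (cst r * alpha - 1) (CARD('p) - 1 - i) * gbinom (cst s * alpha - 1) i)"
      using i by (simp add: coeff_Lsub)
  qed
  also have "\<dots> = - bcoef r s"
    by (simp add: bcoef_def Let_def sum_negf)
  finally show ?thesis .
qed

lemma coeff_Lsub_mult_coeff_Lsub_uminus:
  fixes c :: "'p::prime_card mod_ring"
  assumes "c \<noteq> 0" "0 < i" "i < CARD('p)"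
  shows "coeff (Lsub c) i * coeff (Lsub (- c)) (CARD('p) - i)
    = cst c * (\<Prod>m\<in>{1..<CARD('p)} - {CARD('p) - i}. cst c * alpha - of_nat m)"
proof -
  let ?f = "\<lambda>m. cst c * alpha - of_nat m"
  have "(\<Prod>m\<in>{1..i - 1}. cst (- c) * alpha - of_nat m) = (\<Prod>m\<in>{1..i - 1}. - (cst c * alpha + of_nat m))"
    by (simp add: cst.hom_uminus)
  also have "\<dots> = (- 1) ^ (i - 1) * prod ?f {CARD('p) - (i - 1)..CARD('p) - 1}"
  proof -
    have "i - 1 < CARD('p)"
      using assms(3) by simp
    then show ?thesis
      unfolding prod_uminus prod_plus_of_nat_eq_prod_minus[OF \<open>i - 1 < CARD('p)\<close>] by simp
  qed
  finally have L2: "coeff (Lsub (- c)) (CARD('p) - i)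
      = - ((- cst c) ^ (CARD('p) - i) * ((- 1) ^ (i - 1) * prod ?f {CARD('p) - (i - 1)..CARD('p) - 1}))"
    using coeff_Lsub_eq_prod[of "CARD('p) - i" "- c"] assms(2,3) by (simp add: cst.hom_uminus)
  have signs: "cst c ^ i * (- cst c) ^ (CARD('p) - i) * (- 1) ^ (i - 1) = cst c"
  proof -
    have "cst c ^ i * (- cst c) ^ (CARD('p) - i) * (- 1) ^ (i - 1)
        = cst c ^ (i + (CARD('p) - i)) * (- 1) ^ ((CARD('p) - i) + (i - 1))"
      by (simp add: power_minus[of "cst c"] power_add)
    also have "\<dots> = cst c ^ CARD('p) * (- 1) ^ (CARD('p) - 1)"
      using assms(2,3) by simp
    finally show ?thesis
      using minus_one_power_card_minus_1[where 'p='p] by (simp add: cst_power_card)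
  qed
  have "{1..<CARD('p)} - {CARD('p) - i} = {1..CARD('p) - 1 - i} \<union> {CARD('p) - (i - 1)..CARD('p) - 1}"
    using assms(2,3) by auto
  then have split: "prod ?f ({1..<CARD('p)} - {CARD('p) - i})
      = prod ?f {1..CARD('p) - 1 - i} * prod ?f {CARD('p) - (i - 1)..CARD('p) - 1}"
    by (simp add: prod.union_disjoint)
  have "coeff (Lsub c) i * coeff (Lsub (- c)) (CARD('p) - i)
      = (cst c ^ i * (- cst c) ^ (CARD('p) - i) * (- 1) ^ (i - 1))
        * (prod ?f {1..CARD('p) - 1 - i} * prod ?f {CARD('p) - (i - 1)..CARD('p) - 1})"
    unfolding coeff_Lsub_eq_prod[OF assms(3)] L2 by (simp only: minus_mult_minus mult_ac)
  then show ?thesis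
    unfolding signs split .
qed

lemma coeff_Lsub_mult_Lsub_uminus_card:
  fixes c :: "'p::prime_card mod_ring"
  assumes "c \<noteq> 0"
  shows "coeff (Lsub c * Lsub (- c)) CARD('p) = - (alpha ^ (CARD('p) - 2))"
proof -
  let ?x = "cst c * alpha"
  have "{..CARD('p)} = insert 0 (insert CARD('p) {1..<CARD('p)})"
    by auto
  then have "coeff (Lsub c * Lsub (- c)) CARD('p)
      = (\<Sum>i\<in>{1..<CARD('p)}. coeff (Lsub c) i * coeff (Lsub (- c)) (CARD('p) - i))"
    unfolding coeff_mult by (simp add: coeff_Lsub_eq_0)
  also have "\<dots> = cst c * (\<Sum>i\<in>{1..<CARD('p)}. \<Prod>m\<in>{1..<CARD('p)} - {CARD('p) - i}. ?x - of_nat m)"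
    unfolding sum_distrib_left using coeff_Lsub_mult_coeff_Lsub_uminus[OF assms] by (intro sum.cong) auto
  also have "(\<Sum>i\<in>{1..<CARD('p)}. \<Prod>m\<in>{1..<CARD('p)} - {CARD('p) - i}. ?x - of_nat m)
      = (\<Sum>j\<in>{1..<CARD('p)}. \<Prod>m\<in>{1..<CARD('p)} - {j}. ?x - of_nat m)"
    by (rule sum.reindex_bij_witness[of _ "\<lambda>j. CARD('p) - j" "\<lambda>j. CARD('p) - j"]) auto
  also have "\<dots> = - (?x ^ (CARD('p) - 2))"
    by (rule sum_prod_minus_of_nat)
  also have "cst c * - (?x ^ (CARD('p) - 2)) = - (cst c ^ (CARD('p) - 1) * alpha ^ (CARD('p) - 2))"
  proof -
    obtain n where "CARD('p) = Suc (Suc n)"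
      using card_ge_2[where 'p='p] by (metis add_2_eq_Suc le_Suc_ex)
    then show ?thesis
      by (simp add: power_mult_distrib)
  qed
  finally show ?thesis
    using cst_power_card_minus_1[OF assms] by simp
qed

section \<open>The congruences\<close>

lemma modulus_dvd_Lsub_mult_Lsub:
  fixes r s :: "'p::prime_card mod_ring"
  assumes "s \<noteq> 0" "r + s \<noteq> 0"
  shows "modulus dvd Lsub r * Lsub s - smult (bcoef r s) (Lsub (r + s))"
proof (rule modulus_dvd_if_euler_op)
  show "cst (r + s) \<noteq> 0"
    using assms(2) by simp
  show "modulus dvd euler_op (cst (r + s)) alpha (Lsub r * Lsub s - smult (bcoef r s) (Lsub (r + s)))"
    unfolding euler_op_diff euler_op_smult euler_op_Lsub
    unfolding cst.hom_add euler_op_mult euler_op_Lsub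
    by (intro dvd_diff dvd_add dvd_smult dvd_mult2 dvd_mult dvd_refl)
  show "degree (Lsub r * Lsub s - smult (bcoef r s) (Lsub (r + s))) \<le> 2 * CARD('p) - 2"
    using degree_mult_le[of "Lsub r" "Lsub s"] degree_smult_le[of "bcoef r s" "Lsub (r + s)"]
      degree_Lsub[of r] degree_Lsub[of s] degree_Lsub[of "r + s"] card_ge_2[where 'p='p]
    by (intro degree_diff_le) linarith+
  show "coeff (Lsub r * Lsub s - smult (bcoef r s) (Lsub (r + s))) (CARD('p) - 1) = 0"
    using coeff_Lsub_mult_Lsub_top[OF assms(1)] coeff_Lsub_top[of "r + s"]
      cst_power_card_minus_1[OF assms(2)] by simp
qed

lemma modulus_dvd_Lsub_mult_Lsub_uminus:
  fixes c :: "'p::prime_card mod_ring"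
  assumes "c \<noteq> 0"
  shows "modulus dvd Lsub c * Lsub (- c) - [:1 - alpha ^ (CARD('p) - 1):]"
proof -
  let ?q = "Lsub c * Lsub (- c)"
  have "cst c + cst (- c) = 0"
    by (simp flip: cst.hom_add)
  then have "euler_op 0 alpha ?q = smult (cst c) modulus * Lsub (- c) + Lsub c * smult (cst (- c)) modulus"
    using euler_op_mult[of "cst c" "cst (- c)" alpha "Lsub c" "Lsub (- c)"] by (simp only: euler_op_Lsub)
  then have "modulus dvd euler_op 0 alpha ?q"
    by (simp only:) (intro dvd_add dvd_mult2 dvd_mult dvd_smult dvd_refl)
  moreover have "degree ?q < 2 * CARD('p)"
    using degree_mult_le[of "Lsub c" "Lsub (- c)"] degree_Lsub[of c] degree_Lsub[of "- c"]
      card_ge_2[where 'p='p] by linarith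
  ultimately have "modulus dvd ?q - [:coeff ?q 0 + (alpha ^ CARD('p) - alpha) * coeff ?q CARD('p):]"
    by (rule modulus_dvd_minus_const_if_euler_op_0)
  also have "coeff ?q 0 + (alpha ^ CARD('p) - alpha) * coeff ?q CARD('p) = 1 - alpha ^ (CARD('p) - 1)"
  proof -
    obtain n where n: "CARD('p) = Suc (Suc n)"
      using card_ge_2[where 'p='p] by (metis add_2_eq_Suc le_Suc_ex)
    have "coeff ?q 0 = (1 - alpha ^ Suc n) * (1 - alpha ^ Suc n)"
      using coeff_Lsub_0[OF assms] coeff_Lsub_0[of "- c"] assms n by (simp add: coeff_mult)
    moreover have "coeff ?q CARD('p) = - (alpha ^ n)"
      using coeff_Lsub_mult_Lsub_uminus_card[OF assms] n by simp
    ultimately show ?thesis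
      using n by (simp add: algebra_simps)
  qed
  finally show ?thesis .
qed

lemma of_nat_add_mod_ring_nonzero:
  assumes "0 < r" "r < CARD('p)" "s < CARD('p)" "r + s \<noteq> CARD('p)"
  shows "of_nat r + of_nat s \<noteq> (0 :: 'p::prime_card mod_ring)"
proof
  assume "of_nat r + of_nat s = (0 :: 'p mod_ring)"
  then have "CARD('p) dvd r + s"
    by (simp add: of_nat_eq_0_iff_char_dvd flip: of_nat_add)
  moreover from this have "CARD('p) \<le> r + s"
    using assms(1) by (simp add: dvd_imp_le)
  ultimately have "CARD('p) dvd r + s - CARD('p)" "0 < r + s - CARD('p)" "r + s - CARD('p) < CARD('p)"
    using assms by (simp, linarith, linarith)
  then show False
    using nat_dvd_not_less by blast
qed

theorem lemma10:
  assumes "odd (CARD('p::prime_card))"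
  shows "(\<forall>r s :: nat. 0 < r \<and> r < CARD('p) \<and> 0 < s \<and> s < CARD('p) \<and> r + s \<noteq> CARD('p) \<longrightarrow>
            modulus dvd (Lsub (of_nat r :: 'p mod_ring) * Lsub (of_nat s)
                         - smult (bcoef (of_nat r) (of_nat s)) (Lsub (of_nat (r + s)))))
       \<and> (\<forall>r :: nat. 0 < r \<and> r < CARD('p) \<longrightarrow>
            (modulus :: 'p mod_ring poly fract poly) dvd
              (Lsub (of_nat r) * Lsub (- of_nat r) - [: 1 - alpha ^ (CARD('p) - 1) :]))"
proof (intro conjI allI impI)
  fix r s :: nat
  assume "0 < r \<and> r < CARD('p) \<and> 0 < s \<and> s < CARD('p) \<and> r + s \<noteq> CARD('p)"
  then have "of_nat s \<noteq> (0 :: 'p mod_ring)" "of_nat r + of_nat s \<noteq> (0 :: 'p mod_ring)"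
    using of_nat_add_mod_ring_nonzero[where 'p='p, of s 0] of_nat_add_mod_ring_nonzero[where 'p='p, of r s] by auto
  then show "modulus dvd (Lsub (of_nat r :: 'p mod_ring) * Lsub (of_nat s)
      - smult (bcoef (of_nat r) (of_nat s)) (Lsub (of_nat (r + s))))"
    unfolding of_nat_add by (rule modulus_dvd_Lsub_mult_Lsub)
next
  fix r :: nat
  assume "0 < r \<and> r < CARD('p)"
  then have "of_nat r \<noteq> (0 :: 'p mod_ring)"
    using of_nat_add_mod_ring_nonzero[where 'p='p, of r 0] by simp
  then show "(modulus :: 'p mod_ring poly fract poly) dvd
      (Lsub (of_nat r) * Lsub (- of_nat r) - [: 1 - alpha ^ (CARD('p) - 1) :])"
    by (rule modulus_dvd_Lsub_mult_Lsub_uminus)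
qed

end
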